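(* Let $C$ be a finite non-degenerate projective configuration with lines $l_0,l_1,\dots,l_n$, let $\mathcal{P}_0$ be the set of its points not incident to $l_0$, and let $\mathcal{A}=\{(i,p)\in\{1,\dots,n\}\times\mathcal{P}_0 : p \text{ is incident to } l_i\}$. Let $L=\bigoplus_{k\ge1}L_k$ be the free Lie algebra over $\mathbb{Z}$ on $x_1,\dots,x_n$, graded by degree, $H=L_1$, $S_p=\sum_{j:\,p\prec l_j}x_j$ for $p\in\mathcal{P}_0$, $R_2\subset L_2$ the subgroup spanned by the elements $\bar r(i,p)=[x_i,S_p]$ for $(i,p)\in\mathcal{A}$ with $i\neq\min\{j:l_j\succ p\}$ (a $\mathbb{Z}$-basis of $R_2$), $P_2=L_2/R_2$, $R_3=[H,R_2]$, $P_3=L_3/R_3$. The Lie bracket induces a well-defined bilinear map $H\times P_2\to P_3$, $(x,y+R_2)\mapsto[x,y]+R_3$. For $f\in\mathrm{Hom}(H,P_2)$ let $\bar\delta f\in\mathrm{Hom}(R_2,P_3)$ be the restriction to $R_2$ of the homomorphism $L_2\to P_3$ given by $[x,y]\mapsto[x,f(y)]-[y,f(x)]$ for $x,y\in H$. Let $A=H^{\mathcal{A}}$ and define $\tilde\tau:A\to\mathrm{Hom}(R_2,P_3)$ on the basis of $R_2$ by $$\tilde\tau a(\bar r(i,p))=[[x_i,a(i,p)],S_p]+\Big[x_i,\sum_{j:\,p\prec l_j}[x_j,a(j,p)]\Big]+R_3 .$$ Let $B\subseteq A$ be the subgroup of maps $a$ that do not depend on $p$, i.e. $a(i,p)=a(i,q)$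 whenever $(i,p),(i,q)\in\mathcal{A}$. Then $\tilde\tau(B)\subseteq\bar\delta\,\mathrm{Hom}(H,P_2)$.
   Context: A projective configuration is a triple $(\mathcal{L},\mathcal{P},\succ)$ of a set of lines, a set of points and an incidence relation between them (written $l\succ p$ or $p\prec l$) such that any two distinct lines are incident to a unique common point and every point is incident to at least two lines; it is non-degenerate if it has more than one point. $L_2$ is identified with $\Lambda^2H$ via $x\wedge y\mapsto[x,y]$. *)

theory Defs
  imports Main "HOL-Library.Function_Algebras"
begin

text \<open>Lines are indexed by 0..n (l_0,...,l_n), points form a set P of type 'p,
  and I j p means that line l_j is incident to point p.\<close>

definition proj_config :: "nat \<Rightarrow> 'p set \<Rightarrow> (nat \<Rightarrow> 'p \<Rightarrow> bool) \<Rightarrow> bool" where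
  "proj_config n P I \<longleftrightarrow>
     (\<forall>j k. j \<le> n \<and> k \<le> n \<and> j \<noteq> k \<longrightarrow> (\<exists>!p. p \<in> P \<and> I j p \<and> I k p)) \<and>
     (\<forall>p\<in>P. \<exists>j k. j \<le> n \<and> k \<le> n \<and> j \<noteq> k \<and> I j p \<and> I k p)"

definition finite_nondeg_proj_config :: "nat \<Rightarrow> 'p set \<Rightarrow> (nat \<Rightarrow> 'p \<Rightarrow> bool) \<Rightarrow> bool" where
  "finite_nondeg_proj_config n P I \<longleftrightarrow> proj_config n P I \<and> finite P \<and> card P > 1"

definition P0 :: "'p set \<Rightarrow> (nat \<Rightarrow> 'p \<Rightarrow> bool) \<Rightarrow> 'p set" where
  "P0 P I = {p \<in> P. \<not> I 0 p}"

definition incA :: "nat \<Rightarrow> 'p set \<Rightarrow> (nat \<Rightarrow> 'p \<Rightarrow> bool) \<Rightarrow> (nat \<times> 'p) set" where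
  "incA n P I = {(i, p). i \<in> {1..n} \<and> p \<in> P0 P I \<and> I i p}"

text \<open>Elements of the free associative ring Z<x_1,x_2,...> are functions from words
  (lists of generator indices) to coefficients. The free Lie ring on x_1..x_n embeds
  as the Lie subring generated by the x_i, with bracket [u,v] = uv - vu.\<close>

type_synonym fa = "nat list \<Rightarrow> int"

definition fmul :: "fa \<Rightarrow> fa \<Rightarrow> fa" where
  "fmul u v = (\<lambda>w. \<Sum>k\<in>{0..length w}. u (take k w) * v (drop k w))"

definition lbr :: "fa \<Rightarrow> fa \<Rightarrow> fa" where
  "lbr u v = fmul u v - fmul v u"

definition gen :: "nat \<Rightarrow> fa" where
  "gen i = (\<lambda>w. if w = [i] then 1 else 0)"

inductive_set zspan :: "fa set \<Rightarrow> fa set" for G where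
  zero: "0 \<in> zspan G"
| base: "g \<in> G \<Longrightarrow> g \<in> zspan G"
| add: "u \<in> zspan G \<Longrightarrow> v \<in> zspan G \<Longrightarrow> u + v \<in> zspan G"
| neg: "u \<in> zspan G \<Longrightarrow> - u \<in> zspan G"

definition Hdeg1 :: "nat \<Rightarrow> fa set" where
  "Hdeg1 n = zspan (gen ` {1..n})"

definition Ldeg2 :: "nat \<Rightarrow> fa set" where
  "Ldeg2 n = zspan {lbr u v | u v. u \<in> Hdeg1 n \<and> v \<in> Hdeg1 n}"

definition Ldeg3 :: "nat \<Rightarrow> fa set" where
  "Ldeg3 n = zspan {lbr u v | u v. u \<in> Hdeg1 n \<and> v \<in> Ldeg2 n}"

definition Sp :: "nat \<Rightarrow> (nat \<Rightarrow> 'p \<Rightarrow> bool) \<Rightarrow> 'p \<Rightarrow> fa" where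
  "Sp n I p = (\<Sum>j\<in>{j. j \<le> n \<and> I j p}. gen j)"

definition minline :: "nat \<Rightarrow> (nat \<Rightarrow> 'p \<Rightarrow> bool) \<Rightarrow> 'p \<Rightarrow> nat" where
  "minline n I p = Min {j. j \<le> n \<and> I j p}"

definition rbar :: "nat \<Rightarrow> (nat \<Rightarrow> 'p \<Rightarrow> bool) \<Rightarrow> nat \<Rightarrow> 'p \<Rightarrow> fa" where
  "rbar n I i p = lbr (gen i) (Sp n I p)"

definition R2 :: "nat \<Rightarrow> 'p set \<Rightarrow> (nat \<Rightarrow> 'p \<Rightarrow> bool) \<Rightarrow> fa set" where
  "R2 n P I = zspan {rbar n I i p | i p. (i, p) \<in> incA n P I \<and> i \<noteq> minline n I p}"

definition R3 :: "nat \<Rightarrow> 'p set \<Rightarrow> (nat \<Rightarrow> 'p \<Rightarrow> bool) \<Rightarrow> fa set" where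
  "R3 n P I = zspan {lbr h r | h r. h \<in> Hdeg1 n \<and> r \<in> R2 n P I}"

text \<open>Value of tau-tilde a on the basis element rbar(i,p), as an element of L_3
  (a representative of its class in P_3 = L_3/R_3).\<close>
definition tau_val :: "nat \<Rightarrow> (nat \<Rightarrow> 'p \<Rightarrow> bool) \<Rightarrow> (nat \<times> 'p \<Rightarrow> fa) \<Rightarrow> nat \<Rightarrow> 'p \<Rightarrow> fa" where
  "tau_val n I a i p =
     lbr (lbr (gen i) (a (i, p))) (Sp n I p)
     + lbr (gen i) (\<Sum>j\<in>{j. j \<le> n \<and> I j p}. lbr (gen j) (a (j, p)))"

text \<open>A homomorphism f : H \<rightarrow> P_2 is represented by an additive lift f : H \<rightarrow> L_2
  (which exists since H is free). delta-bar f is the homomorphism L_2 \<rightarrow> P_3 with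
  [x,y] \<mapsto> [x,f y] - [y,f x] + R_3; its value on rbar(i,p) = [x_i, S_p] is given below
  (representative in L_3).\<close>
definition is_hom_H_L2 :: "nat \<Rightarrow> (fa \<Rightarrow> fa) \<Rightarrow> bool" where
  "is_hom_H_L2 n f \<longleftrightarrow> (\<forall>x\<in>Hdeg1 n. f x \<in> Ldeg2 n) \<and>
     (\<forall>x\<in>Hdeg1 n. \<forall>y\<in>Hdeg1 n. f (x + y) = f x + f y)"

definition delta_on_bracket :: "(fa \<Rightarrow> fa) \<Rightarrow> fa \<Rightarrow> fa \<Rightarrow> fa" where
  "delta_on_bracket f x y = lbr x (f y) - lbr y (f x)"

end

theory Submission
  imports Defs
begin

text \<open>For a map \<open>a\<close> that does not depend on the point, put \<open>b\<^sub>j = a(j,p)\<close> and let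
  \<open>f : H \<rightarrow> L\<^sub>2\<close> be the additive map with \<open>f x\<^sub>j = [x\<^sub>j, b\<^sub>j]\<close>. Then
  \<open>\<delta>f [x\<^sub>i, S\<^sub>p] = [x\<^sub>i, f S\<^sub>p] - [S\<^sub>p, f x\<^sub>i] = [x\<^sub>i, \<Sum>\<^sub>j [x\<^sub>j, b\<^sub>j]] + [[x\<^sub>i, b\<^sub>i], S\<^sub>p]\<close>,
  which is the defining formula of \<open>\<tau>a [x\<^sub>i, S\<^sub>p]\<close> already in \<open>L\<^sub>3\<close>, not only modulo \<open>R\<^sub>3\<close>.
  Neither the configuration axioms nor the condition \<open>i \<noteq> min{j. l\<^sub>j \<succ> p}\<close> are needed.\<close>

text \<open>\<open>u [j]\<close> is the coefficient of \<open>x\<^sub>j\<close> in \<open>u\<close>, so on \<open>H\<close> this is the additive map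
  sending \<open>x\<^sub>j\<close> to \<open>L j\<close>.\<close>
definition gen_lin_ext :: "nat \<Rightarrow> (nat \<Rightarrow> fa) \<Rightarrow> fa \<Rightarrow> fa" where
  "gen_lin_ext n L u = (\<lambda>w. \<Sum>j\<in>{1..n}. u [j] * L j w)"

lemma gen_lin_ext_add: "gen_lin_ext n L (u + v) = gen_lin_ext n L u + gen_lin_ext n L v"
  unfolding gen_lin_ext_def by (rule ext) (simp add: algebra_simps sum.distrib)

lemma gen_lin_ext_uminus: "gen_lin_ext n L (- u) = - gen_lin_ext n L u"
  unfolding gen_lin_ext_def by (rule ext) (simp add: sum_negf)

lemma gen_lin_ext_zero: "gen_lin_ext n L 0 = 0"
  unfolding gen_lin_ext_def by (rule ext) simp

lemma gen_lin_ext_sum: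
  "finite A \<Longrightarrow> gen_lin_ext n L (\<Sum>j\<in>A. g j) = (\<Sum>j\<in>A. gen_lin_ext n L (g j))"
proof (induction A rule: finite_induct)
  case empty
  show ?case by (simp only: sum.empty gen_lin_ext_zero)
next
  case (insert x F)
  show ?case by (simp only: sum.insert[OF insert.hyps] gen_lin_ext_add insert.IH)
qed

lemma gen_lin_ext_gen:
  assumes "i \<in> {1..n}"
  shows "gen_lin_ext n L (gen i) = L i"
proof (rule ext)
  fix w
  have "(\<Sum>j\<in>{1..n}. gen i [j] * L j w) = (\<Sum>j\<in>{1..n}. if j = i then L i w else 0)"
    by (rule sum.cong) (auto simp: gen_def)
  then show "gen_lin_ext n L (gen i) w = L i w"
    using assms by (simp add: gen_lin_ext_def)
qed

lemma gen_lin_ext_in_zspan: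
  assumes "x \<in> Hdeg1 n" and "\<And>j. j \<in> {1..n} \<Longrightarrow> L j \<in> zspan G"
  shows "gen_lin_ext n L x \<in> zspan G"
  using assms(1) unfolding Hdeg1_def
proof (induction x rule: zspan.induct)
  case zero
  show ?case by (simp only: gen_lin_ext_zero zspan.zero)
next
  case (base g)
  then show ?case using assms(2) gen_lin_ext_gen by auto
next
  case (add u v)
  then show ?case by (simp only: gen_lin_ext_add zspan.add)
next
  case (neg u)
  then show ?case by (simp only: gen_lin_ext_uminus zspan.neg)
qed

lemma gen_in_Hdeg1: "j \<in> {1..n} \<Longrightarrow> gen j \<in> Hdeg1 n"
  unfolding Hdeg1_def by (intro zspan.base imageI)

lemma lbr_antisym: "lbr u v = - lbr v u"
  unfolding lbr_def by simp

lemma is_hom_H_L2_gen_lin_ext_lbr: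
  assumes "\<And>j. j \<in> {1..n} \<Longrightarrow> b j \<in> Hdeg1 n"
  shows "is_hom_H_L2 n (gen_lin_ext n (\<lambda>j. lbr (gen j) (b j)))"
proof -
  have "gen_lin_ext n (\<lambda>j. lbr (gen j) (b j)) x \<in> Ldeg2 n" if "x \<in> Hdeg1 n" for x
    unfolding Ldeg2_def using that
  proof (rule gen_lin_ext_in_zspan)
    fix j
    assume "j \<in> {1..n}"
    then show "lbr (gen j) (b j) \<in> zspan {lbr u v |u v. u \<in> Hdeg1 n \<and> v \<in> Hdeg1 n}"
      using gen_in_Hdeg1 assms by (blast intro: zspan.base)
  qed
  then show ?thesis
    unfolding is_hom_H_L2_def by (simp add: gen_lin_ext_add)
qed

lemma delta_on_bracket_gen_lin_ext_lbr:
  assumes "i \<in> {1..n}" and "finite J" and "J \<subseteq> {1..n}"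
  shows "delta_on_bracket (gen_lin_ext n (\<lambda>j. lbr (gen j) (b j))) (gen i) (\<Sum>j\<in>J. gen j)
           = lbr (lbr (gen i) (b i)) (\<Sum>j\<in>J. gen j) + lbr (gen i) (\<Sum>j\<in>J. lbr (gen j) (b j))"
proof -
  let ?f = "gen_lin_ext n (\<lambda>j. lbr (gen j) (b j))"
  have "?f (\<Sum>j\<in>J. gen j) = (\<Sum>j\<in>J. lbr (gen j) (b j))"
    unfolding gen_lin_ext_sum[OF assms(2)]
    by (intro sum.cong refl) (meson assms(3) gen_lin_ext_gen subsetD)
  moreover have "?f (gen i) = lbr (gen i) (b i)"
    using assms(1) by (simp add: gen_lin_ext_gen)
  ultimately show ?thesis
    unfolding delta_on_bracket_def by (simp add: lbr_antisym[of "\<Sum>j\<in>J. gen j"])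
qed

lemma factor_through_fst:
  assumes "\<forall>i p q. (i, p) \<in> A \<and> (i, q) \<in> A \<longrightarrow> a (i, p) = a (i, q)"
    and "\<forall>x\<in>A. a x \<in> S" and "z \<in> S"
  obtains b where "\<And>i p. (i, p) \<in> A \<Longrightarrow> a (i, p) = b i" and "\<And>i. b i \<in> S"
proof
  define b where "b i = (if \<exists>p. (i, p) \<in> A then a (i, SOME p. (i, p) \<in> A) else z)" for i
  show "a (i, p) = b i" if "(i, p) \<in> A" for i p
  proof -
    have "(i, SOME p. (i, p) \<in> A) \<in> A"
      using that by (rule someI)
    moreover have "b i = a (i, SOME p. (i, p) \<in> A)"
      unfolding b_def using that by (intro if_P) blast
    ultimately show ?thesis
      using assms(1) that by metis
  qed
  show "b i \<in> S" for i
  proof (cases "\<exists>p. (i, p) \<in> A")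
    case True
    then show ?thesis
      using assms(2) someI_ex[OF True] by (simp add: b_def)
  next
    case False
    then show ?thesis
      using assms(3) by (simp add: b_def)
  qed
qed

lemma lines_through_P0_point:
  assumes "(i, p) \<in> incA n P I" and "j \<le> n" and "I j p"
  shows "(j, p) \<in> incA n P I"
  using assms by (cases j) (auto simp: incA_def P0_def)

theorem proposition2p5:
  fixes n :: nat and P :: "'p set" and I :: "nat \<Rightarrow> 'p \<Rightarrow> bool"
    and a :: "nat \<times> 'p \<Rightarrow> fa"
  assumes "finite_nondeg_proj_config n P I"
    and "\<forall>ip\<in>incA n P I. a ip \<in> Hdeg1 n"
    and "\<forall>i p q. (i, p) \<in> incA n P I \<and> (i, q) \<in> incA n P I \<longrightarrow> a (i, p) = a (i, q)"
  shows "\<exists>f. is_hom_H_L2 n f \<and>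
           (\<forall>(i, p)\<in>incA n P I. i \<noteq> minline n I p \<longrightarrow>
              tau_val n I a i p - delta_on_bracket f (gen i) (Sp n I p) \<in> R3 n P I)"
proof -
  obtain b where ab: "\<And>i p. (i, p) \<in> incA n P I \<Longrightarrow> a (i, p) = b i"
    and bH: "\<And>i. b i \<in> Hdeg1 n"
    using factor_through_fst[OF assms(3,2), of 0] by (auto simp: Hdeg1_def zspan.zero)
  define f where "f = gen_lin_ext n (\<lambda>j. lbr (gen j) (b j))"
  have "is_hom_H_L2 n f"
    unfolding f_def using bH by (rule is_hom_H_L2_gen_lin_ext_lbr)
  moreover have "tau_val n I a i p = delta_on_bracket f (gen i) (Sp n I p)"
    if ip: "(i, p) \<in> incA n P I" for i p
  proof -
    define J where "J = {j. j \<le> n \<and> I j p}"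
    have lines: "(j, p) \<in> incA n P I" if "j \<in> J" for j
      using lines_through_P0_point[OF ip] that by (simp add: J_def)
    then have "J \<subseteq> {1..n}"
      by (auto simp: incA_def)
    moreover have "i \<in> {1..n}"
      using ip by (simp add: incA_def)
    moreover have "finite J"
      by (simp add: J_def)
    moreover have "(\<Sum>j\<in>J. lbr (gen j) (a (j, p))) = (\<Sum>j\<in>J. lbr (gen j) (b j))"
      by (intro sum.cong refl) (simp add: ab lines)
    ultimately show ?thesis
      unfolding f_def tau_val_def Sp_def J_def[symmetric]
      by (simp add: delta_on_bracket_gen_lin_ext_lbr ab ip)
  qed
  ultimately show ?thesis
    by (intro exI[of _ f]) (auto simp: R3_def zspan.zero)
qed

end
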